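(* For every integer $n\geq 4$ there exist connected graphs $G$ and $H$ on $n$ vertices such that $\psi(G)=\psi(H)$ but $G$ and $H$ are not isomorphic.
   Context: All graphs are finite, simple and nonempty. For a graph $G$ and a positive integer $k$, a $k$-path vertex cover ($k$-PVC) of $G$ is a set $S$ of vertices such that every path on $k$ vertices in $G$ contains at least one vertex of $S$ (if $G$ has no path on $k$ vertices, the empty set is a $k$-PVC). $\psi_k(G)$ denotes the minimum cardinality of a $k$-PVC of $G$. For a graph $G$ on $n$ vertices, the path sequence of $G$ is $\psi(G)=(\psi_1(G),\psi_2(G),\ldots,\psi_n(G))$. *)

theory Defs
  imports Main
begin

definition simple_graph :: "nat \<Rightarrow> nat set set \<Rightarrow> bool" where
  "simple_graph n E \<longleftrightarrow> (\<forall>e\<in>E. \<exists>u v. e = {u, v} \<and> u \<noteq> v \<and> u < n \<and> v < n)"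

definition adj :: "nat set set \<Rightarrow> nat \<Rightarrow> nat \<Rightarrow> bool" where
  "adj E u v \<longleftrightarrow> {u, v} \<in> E"

definition is_path :: "nat \<Rightarrow> nat set set \<Rightarrow> nat list \<Rightarrow> bool" where
  "is_path n E p \<longleftrightarrow> p \<noteq> [] \<and> distinct p \<and> set p \<subseteq> {0..<n}
     \<and> (\<forall>i. Suc i < length p \<longrightarrow> adj E (p ! i) (p ! Suc i))"

definition connected_graph :: "nat \<Rightarrow> nat set set \<Rightarrow> bool" where
  "connected_graph n E \<longleftrightarrow> (\<forall>u<n. \<forall>v<n. \<exists>p. is_path n E p \<and> hd p = u \<and> last p = v)"

definition is_kPVC :: "nat \<Rightarrow> nat set set \<Rightarrow> nat \<Rightarrow> nat set \<Rightarrow> bool" where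
  "is_kPVC n E k S \<longleftrightarrow> S \<subseteq> {0..<n} \<and>
     (\<forall>p. is_path n E p \<and> length p = k \<longrightarrow> set p \<inter> S \<noteq> {})"

definition psi :: "nat \<Rightarrow> nat set set \<Rightarrow> nat \<Rightarrow> nat" where
  "psi n E k = (LEAST m. \<exists>S. is_kPVC n E k S \<and> card S = m)"

definition path_sequence :: "nat \<Rightarrow> nat set set \<Rightarrow> nat list" where
  "path_sequence n E = map (psi n E) [1..<Suc n]"

definition graph_iso :: "nat \<Rightarrow> nat set set \<Rightarrow> nat set set \<Rightarrow> bool" where
  "graph_iso n E F \<longleftrightarrow> (\<exists>f. bij_betw f {0..<n} {0..<n} \<and>
     (\<forall>u<n. \<forall>v<n. adj E u v \<longleftrightarrow> adj F (f u) (f v)))"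

end

theory Submission
  imports Defs
begin

text \<open>Both graphs are \<open>K\<^sub>n\<close> with a nonempty matching removed: one missing edge for \<open>G\<close>, two disjoint
  missing edges for \<open>H\<close>. For any such graph, every vertex set of size other than 2 that is not
  itself a missing edge can be traced by a path, so \<open>\<psi>\<^sub>k = n - k + 1\<close> for \<open>k \<noteq> 2\<close>, exactly as for
  \<open>K\<^sub>n\<close>; and the independent sets have at most 2 vertices, so \<open>\<psi>\<^sub>2 = n - 2\<close>. Hence the path
  sequence does not see the size of the matching, while isomorphisms preserve it.\<close>

definition complete_minus :: "nat \<Rightarrow> nat set set \<Rightarrow> nat set set" where
  "complete_minus n M = {{u, v} | u v. u < n \<and> v < n \<and> u \<noteq> v \<and> {u, v} \<notin> M}"

lemma adj_complete_minus:
  "adj (complete_minus n M) u v \<longleftrightarrow> u < n \<and> v < n \<and> u \<noteq> v \<and> {u, v} \<notin> M"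
proof
  assume "adj (complete_minus n M) u v"
  then obtain a b where ab: "{u, v} = {a, b}" "a < n" "b < n" "a \<noteq> b" "{a, b} \<notin> M"
    unfolding adj_def complete_minus_def by blast
  then have "u < n \<and> v < n \<and> u \<noteq> v"
    by (auto simp: doubleton_eq_iff)
  then show "u < n \<and> v < n \<and> u \<noteq> v \<and> {u, v} \<notin> M"
    using ab(1,5) by simp
qed (auto simp: adj_def complete_minus_def)

lemma simple_graph_complete_minus: "simple_graph n (complete_minus n M)"
  unfolding simple_graph_def complete_minus_def by auto

lemma matching_partner_unique:
  assumes "pairwise disjnt M" "{u, v} \<in> M" "{u, w} \<in> M"
  shows "v = w"
proof -
  have "{u, v} = {u, w}"
  proof (rule ccontr)
    assume "{u, v} \<noteq> {u, w}"
    then have "disjnt {u, v} {u, w}"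
      using pairwiseD[OF assms] by blast
    then show False by (simp add: disjnt_def)
  qed
  then show ?thesis by (auto simp: doubleton_eq_iff)
qed

lemma successively_nth:
  "successively P xs \<Longrightarrow> Suc i < length xs \<Longrightarrow> P (xs ! i) (xs ! Suc i)"
  by (induction P xs arbitrary: i rule: successively.induct) (auto simp: nth_Cons split: nat.split)

lemma distinct_hd_eq_last: "distinct xs \<Longrightarrow> xs \<noteq> [] \<Longrightarrow> hd xs = last xs \<Longrightarrow> xs = [hd xs]"
  by (cases xs rule: rev_cases) (auto simp: hd_append split: if_splits)

text \<open>A new vertex goes at whichever end of the path is not its partner in \<open>M\<close>; both ends are
  its partner only when the path is a single vertex, and then the enlarged set is an edge of \<open>M\<close>.\<close>
lemma matching_complement_traceable:
  assumes "simple_graph n M" "pairwise disjnt M" "finite T" "T \<notin> M"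
  shows "\<exists>xs. distinct xs \<and> set xs = T \<and> successively (\<lambda>x y. {x, y} \<notin> M) xs"
  using assms(3,4)
proof (induction T rule: finite_induct)
  case empty
  show ?case by (intro exI[of _ "[]"]) simp
next
  case (insert y T)
  show ?case
  proof (cases "T \<in> M")
    case True
    then obtain a b where T: "T = {a, b}" "a \<noteq> b"
      using assms(1) unfolding simple_graph_def by blast
    have ab: "{a, b} \<in> M" "{b, a} \<in> M"
      using True T by (simp_all add: insert_commute)
    have "y \<noteq> a" "y \<noteq> b"
      using insert.hyps(2) T by auto
    then have "{a, y} \<notin> M" "{b, y} \<notin> M"
      using matching_partner_unique[OF assms(2) ab(1)] matching_partner_unique[OF assms(2) ab(2)]
      by blast+
    then show ?thesis
      using insert.hyps(2) T by (intro exI[of _ "[a, y, b]"]) (auto simp: insert_commute)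
  next
    case False
    then obtain xs where xs: "distinct xs" "set xs = T" "successively (\<lambda>x y. {x, y} \<notin> M) xs"
      using insert.IH by blast
    consider "xs = []" | "xs \<noteq> []" "{last xs, y} \<notin> M" | "xs \<noteq> []" "{hd xs, y} \<notin> M"
      | "xs \<noteq> []" "{y, last xs} \<in> M" "{y, hd xs} \<in> M"
      by (auto simp: insert_commute)
    then show ?thesis
    proof cases
      case 1
      then show ?thesis using xs by (intro exI[of _ "[y]"]) auto
    next
      case 2
      then show ?thesis using xs insert.hyps(2)
        by (intro exI[of _ "xs @ [y]"]) (auto simp: successively_append_iff)
    next
      case 3
      then show ?thesis using xs insert.hyps(2)
        by (intro exI[of _ "y # xs"]) (auto simp: successively_Cons insert_commute)
    next
      case 4
      then have "hd xs = last xs"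
        using matching_partner_unique[OF assms(2)] by blast
      then obtain x where "xs = [x]"
        using distinct_hd_eq_last[OF xs(1) \<open>xs \<noteq> []\<close>] by metis
      then show ?thesis
        using 4 insert.prems xs(2) by auto
    qed
  qed
qed

lemma is_path_complete_minusI:
  assumes "xs \<noteq> []" "distinct xs" "set xs \<subseteq> {0..<n}" "successively (\<lambda>x y. {x, y} \<notin> M) xs"
  shows "is_path n (complete_minus n M) xs"
proof -
  have "xs ! i < n" if "i < length xs" for i
    using assms(3) nth_mem[OF that] by auto
  moreover have "xs ! i \<noteq> xs ! Suc i" if "Suc i < length xs" for i
    using assms(2) that by (simp add: nth_eq_iff_index_eq)
  ultimately show ?thesis
    unfolding is_path_def adj_complete_minus using assms successively_nth[OF assms(4)] by simp
qed

lemma is_path_take: "is_path n E p \<Longrightarrow> 0 < k \<Longrightarrow> is_path n E (take k p)"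
  unfolding is_path_def by (auto dest: in_set_takeD)

lemma psi_eqI:
  assumes "is_kPVC n E k S" "\<And>S'. is_kPVC n E k S' \<Longrightarrow> card S \<le> card S'"
  shows "psi n E k = card S"
  unfolding psi_def using assms by (intro Least_equality) auto

text \<open>The pigeonhole bound \<open>\<psi>\<^sub>k \<le> n - k + 1\<close>, valid in every graph.\<close>
lemma is_kPVC_atLeastLessThan: "1 \<le> k \<Longrightarrow> is_kPVC n E k {k - 1..<n}"
  unfolding is_kPVC_def
proof (intro conjI allI impI)
  fix p assume "1 \<le> k" and p: "is_path n E p \<and> length p = k"
  show "set p \<inter> {k - 1..<n} \<noteq> {}"
  proof
    assume "set p \<inter> {k - 1..<n} = {}"
    moreover have "set p \<subseteq> {0..<n}"
      using p unfolding is_path_def by simp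
    ultimately have "set p \<subseteq> {0..<k - 1}"
      by fastforce
    then have "card (set p) \<le> k - 1"
      using card_mono[of "{0..<k - 1}" "set p"] by simp
    moreover have "card (set p) = k"
      using p distinct_card unfolding is_path_def by blast
    ultimately show False using \<open>1 \<le> k\<close> by simp
  qed
qed auto

lemma is_2PVC_complete_minus:
  assumes "simple_graph n M" "e \<in> M"
  shows "is_kPVC n (complete_minus n M) 2 ({0..<n} - e)"
  unfolding is_kPVC_def
proof (intro conjI allI impI)
  fix p assume p: "is_path n (complete_minus n M) p \<and> length p = 2"
  then obtain a b where "p = [a, b]"
    by (auto simp: numeral_2_eq_2 length_Suc_conv)
  with p have ab: "{a, b} \<notin> M" "a \<noteq> b" "a < n" "b < n"
    unfolding is_path_def by (auto simp: adj_complete_minus)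
  obtain u v where e: "e = {u, v}"
    using assms unfolding simple_graph_def by blast
  have "{a, b} \<noteq> e"
    using ab(1) assms(2) by blast
  then have "\<not> {a, b} \<subseteq> e"
    using ab(2) unfolding e by blast
  then show "set p \<inter> ({0..<n} - e) \<noteq> {}"
    using \<open>p = [a, b]\<close> ab by auto
qed auto

text \<open>If the uncovered vertices are at least \<open>m \<ge> k\<close> with \<open>m \<noteq> 2\<close>, then \<open>m\<close> of them carry a path,
  whose first \<open>k\<close> vertices avoid the cover. Taking \<open>m = 3\<close> handles \<open>k = 2\<close>.\<close>
lemma is_kPVC_complete_minus_card_ge:
  assumes M: "simple_graph n M" "pairwise disjnt M"
    and S: "is_kPVC n (complete_minus n M) k S"
    and k: "1 \<le> k" "k \<le> m" "m \<noteq> 2" "m \<le> n"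
  shows "n - m + 1 \<le> card S"
proof (rule ccontr)
  assume "\<not> n - m + 1 \<le> card S"
  moreover have "S \<subseteq> {0..<n}"
    using S unfolding is_kPVC_def by simp
  ultimately have "m \<le> card ({0..<n} - S)"
    using k(4) by (simp add: card_Diff_subset finite_subset)
  then obtain T where T: "T \<subseteq> {0..<n} - S" "card T = m"
    by (meson obtain_subset_with_card_n)
  have "T \<notin> M"
    using T(2) k(3) M(1) unfolding simple_graph_def by (auto simp: card_insert_if)
  then obtain xs where xs: "distinct xs" "set xs = T" "successively (\<lambda>x y. {x, y} \<notin> M) xs"
    using matching_complement_traceable[OF M] T by (meson finite_Diff finite_atLeastLessThan finite_subset)
  have "length xs = m"
    using xs T(2) distinct_card by fastforce
  then have "is_path n (complete_minus n M) (take k xs)"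
    using xs T k by (intro is_path_take is_path_complete_minusI) auto
  moreover have "length (take k xs) = k"
    using \<open>length xs = m\<close> k by simp
  ultimately have "set (take k xs) \<inter> S \<noteq> {}"
    using S unfolding is_kPVC_def by blast
  then show False
    using xs(2) T(1) by (auto dest: in_set_takeD)
qed

lemma psi_complete_minus:
  assumes M: "simple_graph n M" "pairwise disjnt M" "M \<noteq> {}"
    and k: "1 \<le> k" "k \<le> n"
  shows "psi n (complete_minus n M) k = (if k = 2 then n - 2 else n - k + 1)"
proof (cases "k = 2")
  case True
  obtain e where "e \<in> M" using M(3) by blast
  then obtain u v where e: "e = {u, v}" "u \<noteq> v" "u < n" "v < n"
    using M(1) unfolding simple_graph_def by blast
  have "card ({0..<n} - e) = n - 2"
    using e by (simp add: card_Diff_subset)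
  moreover have "n - 2 \<le> card S" if "is_kPVC n (complete_minus n M) 2 S" for S
    using is_kPVC_complete_minus_card_ge[OF M(1,2) that, of 3] by (cases "n \<ge> 3") auto
  ultimately have "psi n (complete_minus n M) 2 = n - 2"
    using psi_eqI[OF is_2PVC_complete_minus[OF M(1) \<open>e \<in> M\<close>]] by simp
  then show ?thesis using True by simp
next
  case False
  have "card {k - 1..<n} = n - k + 1"
    using k by simp
  moreover have "psi n (complete_minus n M) k = card {k - 1..<n}"
    using is_kPVC_complete_minus_card_ge[OF M(1,2) _ k(1) order_refl False k(2)] \<open>card {k - 1..<n} = n - k + 1\<close>
    by (intro psi_eqI[OF is_kPVC_atLeastLessThan[OF k(1)]]) simp
  ultimately show ?thesis using False by simp
qed

text \<open>A missing edge \<open>{u, v}\<close> is bypassed through any third vertex, which the matching cannot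
  pair with \<open>u\<close> or \<open>v\<close>.\<close>
lemma connected_complete_minus:
  assumes "pairwise disjnt M" "3 \<le> n"
  shows "connected_graph n (complete_minus n M)"
  unfolding connected_graph_def
proof (intro allI impI)
  fix u v assume uv: "u < n" "v < n"
  consider "u = v" | "u \<noteq> v" "{u, v} \<notin> M" | "u \<noteq> v" "{u, v} \<in> M" by blast
  then show "\<exists>p. is_path n (complete_minus n M) p \<and> hd p = u \<and> last p = v"
  proof cases
    case 1
    then show ?thesis using uv by (intro exI[of _ "[u]"]) (auto simp: is_path_def)
  next
    case 2
    then show ?thesis using uv by (intro exI[of _ "[u, v]"]) (auto intro!: is_path_complete_minusI)
  next
    case 3
    have "card {u, v} < card {0..<n}"
      using assms(2) by (simp add: card_insert_if)
    then have "\<not> {0..<n} \<subseteq> {u, v}"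
      using card_mono[of "{u, v}" "{0..<n}"] by auto
    then obtain w where "w \<in> {0..<n} - {u, v}"
      by blast
    then have w: "w < n" "w \<noteq> u" "w \<noteq> v"
      by auto
    have "{v, u} \<in> M"
      using 3 by (simp add: insert_commute)
    then have "{u, w} \<notin> M" "{v, w} \<notin> M"
      using w matching_partner_unique[OF assms(1) \<open>{u, v} \<in> M\<close>] matching_partner_unique[OF assms(1)]
      by blast+
    then show ?thesis
      using uv w 3 by (intro exI[of _ "[u, w, v]"]) (auto intro!: is_path_complete_minusI simp: insert_commute)
  qed
qed

text \<open>An isomorphism maps the non-edges of one graph bijectively onto those of the other.\<close>
lemma graph_iso_complete_minus_card:
  assumes M: "simple_graph n M" and M': "simple_graph n M'"
    and iso: "graph_iso n (complete_minus n M) (complete_minus n M')"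
  shows "card M = card M'"
proof -
  obtain f where f: "bij_betw f {0..<n} {0..<n}"
    and adj_iff: "\<forall>u<n. \<forall>v<n. adj (complete_minus n M) u v \<longleftrightarrow> adj (complete_minus n M') (f u) (f v)"
    using iso unfolding graph_iso_def by blast
  have inj: "inj_on f {0..<n}" and f_range: "f ` {0..<n} = {0..<n}"
    using bij_betw_imp_inj_on[OF f] bij_betw_imp_surj_on[OF f] .
  have edge_iff: "{u, v} \<in> M \<longleftrightarrow> {f u, f v} \<in> M'" if "u < n" "v < n" "u \<noteq> v" for u v
  proof -
    have "f u < n" "f v < n"
      using bij_betwE[OF f] that by auto
    moreover have "f u \<noteq> f v"
      using inj_on_eq_iff[OF inj] that by simp
    ultimately show ?thesis
      using adj_iff[rule_format, OF that(1,2)] that unfolding adj_complete_minus by simp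
  qed
  have "M' = (\<lambda>e. f ` e) ` M"
  proof (intro equalityI subsetI)
    fix e' assume "e' \<in> M'"
    then obtain x y where e': "e' = {x, y}" "x \<noteq> y" "x < n" "y < n"
      using M' unfolding simple_graph_def by blast
    then have "x \<in> f ` {0..<n}" "y \<in> f ` {0..<n}"
      unfolding f_range by simp_all
    then obtain u v where uv: "u < n" "v < n" "x = f u" "y = f v"
      by auto
    then have "{u, v} \<in> M"
      using edge_iff[of u v] e' \<open>e' \<in> M'\<close> by auto
    moreover have "e' = f ` {u, v}"
      using e'(1) uv by simp
    ultimately show "e' \<in> (\<lambda>e. f ` e) ` M"
      by (rule rev_image_eqI)
  next
    fix e' assume "e' \<in> (\<lambda>e. f ` e) ` M"
    then obtain e where "e \<in> M" "e' = f ` e"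
      by blast
    moreover obtain u v where "e = {u, v}" "u \<noteq> v" "u < n" "v < n"
      using M \<open>e \<in> M\<close> unfolding simple_graph_def by blast
    ultimately show "e' \<in> M'"
      using edge_iff by auto
  qed
  moreover have "M \<subseteq> Pow {0..<n}"
    using M unfolding simple_graph_def by auto
  ultimately show ?thesis
    using card_image[OF inj_on_subset[OF inj_on_image_Pow[OF inj]]] by metis
qed

theorem mainTheorem7:
  fixes n :: nat
  assumes "n \<ge> 4"
  shows "\<exists>G H. simple_graph n G \<and> simple_graph n H \<and>
           connected_graph n G \<and> connected_graph n H \<and>
           path_sequence n G = path_sequence n H \<and> \<not> graph_iso n G H"
proof (intro exI conjI)
  let ?M = "{{0, 1}} :: nat set set" and ?M' = "{{0, 1}, {2, 3}} :: nat set set"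
  have M': "simple_graph n ?M'" "pairwise disjnt ?M'"
    using assms unfolding simple_graph_def by (fastforce, simp add: pairwise_def disjnt_def)
  then have M: "simple_graph n ?M" "pairwise disjnt ?M"
    by (auto simp: simple_graph_def pairwise_def)
  show "simple_graph n (complete_minus n ?M)" "simple_graph n (complete_minus n ?M')"
    by (rule simple_graph_complete_minus)+
  show "connected_graph n (complete_minus n ?M)" "connected_graph n (complete_minus n ?M')"
    using assms M(2) M'(2) by (auto intro: connected_complete_minus)
  show "path_sequence n (complete_minus n ?M) = path_sequence n (complete_minus n ?M')"
    unfolding path_sequence_def
    using psi_complete_minus[OF M] psi_complete_minus[OF M'] by (intro map_cong) auto
  have "card ?M \<noteq> card ?M'"
    by (simp add: doubleton_eq_iff)
  then show "\<not> graph_iso n (complete_minus n ?M) (complete_minus n ?M')"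
    using graph_iso_complete_minus_card[OF M(1) M'(1)] by blast
qed

end
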